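(* Let $U$ be a unitary acting on $n$ qubits. Then $U$ is a Pauli-Square-Root Clifford (PSC) if and only if the controlled unitary $C(U)=|0\rangle\langle 0|\otimes I+|1\rangle\langle 1|\otimes U$ (acting on $n+1$ qubits) belongs to the third level $\mathcal{C}^{(3)}$ of the Clifford hierarchy.
   Context: The $n$-qubit Pauli group $\mathcal{P}_n$ consists of all $n$-fold tensor products of single-qubit Pauli matrices $I,X,Y,Z$ multiplied by a phase in $\{\pm 1,\pm i\}$. The Clifford hierarchy is defined by $\mathcal{C}^{(1)}=\mathcal{P}_n$ and, for $k\ge 2$, $\mathcal{C}^{(k)}=\{V\in U(2^n): VPV^{\dagger}\in\mathcal{C}^{(k-1)}\ \forall P\in\mathcal{P}_n\}$; $\mathcal{C}^{(2)}$ is the Clifford group. A unitary is a Pauli-Square-Root Clifford (PSC) if it is a Clifford that is not a Pauli and whose square is a Pauli. *)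

theory Defs
  imports "Jordan_Normal_Form.Schur_Decomposition"
begin

definition kron :: "complex mat \<Rightarrow> complex mat \<Rightarrow> complex mat" where
  "kron A B = mat (dim_row A * dim_row B) (dim_col A * dim_col B)
     (\<lambda>(i,j). A $$ (i div dim_row B, j div dim_col B) * B $$ (i mod dim_row B, j mod dim_col B))"

definition pauli_I :: "complex mat" where "pauli_I = mat_of_rows_list 2 [[1,0],[0,1]]"
definition pauli_X :: "complex mat" where "pauli_X = mat_of_rows_list 2 [[0,1],[1,0]]"
definition pauli_Y :: "complex mat" where "pauli_Y = mat_of_rows_list 2 [[0,-\<i>],[\<i>,0]]"
definition pauli_Z :: "complex mat" where "pauli_Z = mat_of_rows_list 2 [[1,0],[0,-1]]"

definition single_paulis :: "complex mat set" where
  "single_paulis = {pauli_I, pauli_X, pauli_Y, pauli_Z}"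

text \<open>n-fold tensor product of a list of single-qubit matrices (first list entry = first qubit).\<close>
fun tensor_list :: "complex mat list \<Rightarrow> complex mat" where
  "tensor_list [] = 1\<^sub>m 1"
| "tensor_list (A # As) = kron A (tensor_list As)"

definition pauli_group :: "nat \<Rightarrow> complex mat set" where
  "pauli_group n = {c \<cdot>\<^sub>m tensor_list ps | c ps.
      c \<in> {1, -1, \<i>, -\<i>} \<and> length ps = n \<and> set ps \<subseteq> single_paulis}"

definition unitary_n :: "nat \<Rightarrow> complex mat \<Rightarrow> bool" where
  "unitary_n n U \<longleftrightarrow> U \<in> carrier_mat (2^n) (2^n) \<and> U * mat_adjoint U = 1\<^sub>m (2^n)"

text \<open>Clifford hierarchy: clifford_hier n k = C^(k) on n qubits, for k \<ge> 1 (level 0 is unused).\<close>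
fun clifford_hier :: "nat \<Rightarrow> nat \<Rightarrow> complex mat set" where
  "clifford_hier n 0 = {}"
| "clifford_hier n (Suc 0) = pauli_group n"
| "clifford_hier n (Suc (Suc k)) =
     {V. unitary_n n V \<and> (\<forall>P \<in> pauli_group n. V * P * mat_adjoint V \<in> clifford_hier n (Suc k))}"

definition PSC :: "nat \<Rightarrow> complex mat \<Rightarrow> bool" where
  "PSC n U \<longleftrightarrow> U \<in> clifford_hier n 2 \<and> U \<notin> pauli_group n \<and> U * U \<in> pauli_group n"

definition ket0bra0 :: "complex mat" where "ket0bra0 = mat_of_rows_list 2 [[1,0],[0,0]]"
definition ket1bra1 :: "complex mat" where "ket1bra1 = mat_of_rows_list 2 [[0,0],[0,1]]"

definition controlled :: "nat \<Rightarrow> complex mat \<Rightarrow> complex mat" where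
  "controlled n U = kron ket0bra0 (1\<^sub>m (2^n)) + kron ket1bra1 U"

end

theory Submission
  imports Defs
begin

(*
  Write an operator on n+1 qubits as a 2x2 block matrix of operators on n qubits, the first
  qubit indexing the blocks. The (n+1)-qubit Paulis are then the matrices diag(a R, b R) and
  antidiag(a R, b R) with R an n-qubit Pauli and a, b = +-1, and C(U) = diag(I, U).

  A Clifford of the form diag(A, B) or antidiag(A, B) conjugates X (x) I = antidiag(I, I) to
  antidiag(A B^dagger, B A^dagger), so B A^dagger must be Pauli. Since C(U) conjugates X (x) I
  to antidiag(U^dagger, U), C(U) is Clifford iff U is Pauli, and C(U) in the third level forces
  U U to be Pauli; conjugating I (x) P gives diag(P, U P U^dagger), which forces U P U^dagger
  to be Pauli, i.e. U is Clifford.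

  Conversely, let U be Clifford with U U Pauli. Every conjugate C(U) Q C(U)^dagger is
  diag(V, B) or antidiag(V, B) with V Clifford and V^dagger B Pauli, hence equals
  (I (x) V) diag(I, V^dagger B), possibly followed by X (x) I: a product of Cliffords.
*)

section \<open>Adjoints and block matrices\<close>

lemma dim_mat_adjoint [simp]:
  fixes A :: "complex mat"
  shows "dim_row (mat_adjoint A) = dim_col A" "dim_col (mat_adjoint A) = dim_row A"
  unfolding mat_adjoint_def by (simp_all add: mat_of_rows_def)

lemma index_mat_adjoint [simp]:
  fixes A :: "complex mat"
  shows "i < dim_col A \<Longrightarrow> j < dim_row A \<Longrightarrow> mat_adjoint A $$ (i, j) = cnj (A $$ (j, i))"
  unfolding mat_adjoint_def by (simp add: mat_of_rows_index)

lemma mat_adjoint_carrier [simp]: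
  fixes A :: "complex mat"
  shows "A \<in> carrier_mat nr nc \<Longrightarrow> mat_adjoint A \<in> carrier_mat nc nr"
  unfolding carrier_mat_def by simp

lemma mat_adjoint_adjoint [simp]:
  fixes A :: "complex mat"
  shows "mat_adjoint (mat_adjoint A) = A"
  by (rule eq_matI) simp_all

lemma mat_adjoint_smult [simp]:
  fixes A :: "complex mat"
  shows "mat_adjoint (k \<cdot>\<^sub>m A) = cnj k \<cdot>\<^sub>m mat_adjoint A"
  by (rule eq_matI) simp_all

lemma mat_adjoint_one [simp]: "mat_adjoint (1\<^sub>m n :: complex mat) = 1\<^sub>m n"
  by (rule eq_matI) simp_all

lemma mat_adjoint_zero [simp]: "mat_adjoint (0\<^sub>m nr nc :: complex mat) = 0\<^sub>m nc nr"
  by (rule eq_matI) simp_all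

lemma mat_adjoint_mult:
  fixes A B :: "complex mat"
  assumes "A \<in> carrier_mat nr n" "B \<in> carrier_mat n nc"
  shows "mat_adjoint (A * B) = mat_adjoint B * mat_adjoint A"
  by (rule eq_matI) (use assms in \<open>auto simp: scalar_prod_def mult.commute\<close>)

lemma mat_adjoint_four_block_mat:
  fixes A B C D :: "complex mat"
  assumes "A \<in> carrier_mat nr1 nc1" "B \<in> carrier_mat nr1 nc2"
    "C \<in> carrier_mat nr2 nc1" "D \<in> carrier_mat nr2 nc2"
  shows "mat_adjoint (four_block_mat A B C D) =
    four_block_mat (mat_adjoint A) (mat_adjoint C) (mat_adjoint B) (mat_adjoint D)"
  by (rule eq_matI) (use assms in auto)

lemma smult_smult_mat [simp]: "(a :: 'a :: semigroup_mult) \<cdot>\<^sub>m (b \<cdot>\<^sub>m A) = (a * b) \<cdot>\<^sub>m A"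
  by (rule eq_matI) (simp_all add: mult.assoc)

lemma one_smult_mat [simp]: "(1 :: 'a :: monoid_mult) \<cdot>\<^sub>m A = A"
  by (rule eq_matI) simp_all

lemma zero_smult_mat [simp]: "(0 :: 'a :: mult_zero) \<cdot>\<^sub>m A = 0\<^sub>m (dim_row A) (dim_col A)"
  by (rule eq_matI) simp_all

lemma smult_mult_smult_mat:
  assumes "A \<in> carrier_mat nr n" "B \<in> carrier_mat n nc"
  shows "(a \<cdot>\<^sub>m A) * (b \<cdot>\<^sub>m B) = ((a :: 'a :: comm_semiring_0) * b) \<cdot>\<^sub>m (A * B)"
proof -
  have "(a \<cdot>\<^sub>m A) * (b \<cdot>\<^sub>m B) = a \<cdot>\<^sub>m (A * (b \<cdot>\<^sub>m B))"
    by (rule mult_smult_assoc_mat) (use assms in auto)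
  also have "\<dots> = (a * b) \<cdot>\<^sub>m (A * B)"
    using assms by (simp add: mult_smult_distrib)
  finally show ?thesis .
qed

definition block_diag :: "'a :: zero mat \<Rightarrow> 'a mat \<Rightarrow> 'a mat" where
  "block_diag A B = four_block_mat A (0\<^sub>m (dim_row A) (dim_col B)) (0\<^sub>m (dim_row B) (dim_col A)) B"

definition block_antidiag :: "'a :: zero mat \<Rightarrow> 'a mat \<Rightarrow> 'a mat" where
  "block_antidiag A B =
    four_block_mat (0\<^sub>m (dim_row A) (dim_col B)) A B (0\<^sub>m (dim_row B) (dim_col A))"

context
  fixes N :: nat
begin

lemma block_diag_carrier [simp]:
  "A \<in> carrier_mat N N \<Longrightarrow> B \<in> carrier_mat N N \<Longrightarrow>
    block_diag A B \<in> carrier_mat (N + N) (N + N)"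
  unfolding block_diag_def by auto

lemma block_antidiag_carrier [simp]:
  "A \<in> carrier_mat N N \<Longrightarrow> B \<in> carrier_mat N N \<Longrightarrow>
    block_antidiag A B \<in> carrier_mat (N + N) (N + N)"
  unfolding block_antidiag_def by auto

context
  fixes A B C D :: "'a :: semiring_0 mat"
  assumes carrier: "A \<in> carrier_mat N N" "B \<in> carrier_mat N N"
    "C \<in> carrier_mat N N" "D \<in> carrier_mat N N"
begin

lemma block_diag_mult_block_diag:
  "block_diag A B * block_diag C D = block_diag (A * C) (B * D)"
  unfolding block_diag_def using carrier
  by (subst mult_four_block_mat[of _ N N _ N _ N]) auto

lemma block_diag_mult_block_antidiag:
  "block_diag A B * block_antidiag C D = block_antidiag (A * C) (B * D)"
  unfolding block_diag_def block_antidiag_def using carrier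
  by (subst mult_four_block_mat[of _ N N _ N _ N]) auto

lemma block_antidiag_mult_block_diag:
  "block_antidiag A B * block_diag C D = block_antidiag (A * D) (B * C)"
  unfolding block_diag_def block_antidiag_def using carrier
  by (subst mult_four_block_mat[of _ N N _ N _ N]) auto

lemma block_antidiag_mult_block_antidiag:
  "block_antidiag A B * block_antidiag C D = block_diag (A * D) (B * C)"
  unfolding block_diag_def block_antidiag_def using carrier
  by (subst mult_four_block_mat[of _ N N _ N _ N]) auto

lemma block_antidiag_eq_iff: "block_antidiag A B = block_antidiag C D \<longleftrightarrow> A = C \<and> B = D"
proof
  assume eq: "block_antidiag A B = block_antidiag C D"
  have "A $$ (i, j) = C $$ (i, j) \<and> B $$ (i, j) = D $$ (i, j)" if "i < N" "j < N" for i j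
    using arg_cong[OF eq, of "\<lambda>M. M $$ (i, j + N)"] arg_cong[OF eq, of "\<lambda>M. M $$ (i + N, j)"]
      carrier that unfolding block_antidiag_def by auto
  then show "A = C \<and> B = D"
    using carrier by (auto intro!: eq_matI)
qed simp

lemma block_antidiag_eq_block_diagD: "block_antidiag A B = block_diag C D \<Longrightarrow> C = 0\<^sub>m N N"
proof -
  assume eq: "block_antidiag A B = block_diag C D"
  have "C $$ (i, j) = 0" if "i < N" "j < N" for i j
    using arg_cong[OF eq, of "\<lambda>M. M $$ (i, j)"] carrier that
    unfolding block_diag_def block_antidiag_def by auto
  then show "C = 0\<^sub>m N N"
    using carrier by (auto intro!: eq_matI)
qed

end

lemma block_diag_one: "block_diag (1\<^sub>m N) (1\<^sub>m N) = (1\<^sub>m (N + N) :: 'a :: zero_neq_one mat)"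
  unfolding block_diag_def by simp

lemma smult_block_diag:
  "A \<in> carrier_mat N N \<Longrightarrow> B \<in> carrier_mat N N \<Longrightarrow>
    (c :: 'a :: mult_zero) \<cdot>\<^sub>m block_diag A B = block_diag (c \<cdot>\<^sub>m A) (c \<cdot>\<^sub>m B)"
  unfolding block_diag_def by (subst smult_four_block_mat[of _ N N _ N _ N]) auto

lemma smult_block_antidiag:
  "A \<in> carrier_mat N N \<Longrightarrow> B \<in> carrier_mat N N \<Longrightarrow>
    (c :: 'a :: mult_zero) \<cdot>\<^sub>m block_antidiag A B = block_antidiag (c \<cdot>\<^sub>m A) (c \<cdot>\<^sub>m B)"
  unfolding block_antidiag_def by (subst smult_four_block_mat[of _ N N _ N _ N]) auto

lemma mat_adjoint_block_diag:
  fixes A B :: "complex mat"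
  shows "A \<in> carrier_mat N N \<Longrightarrow> B \<in> carrier_mat N N \<Longrightarrow>
    mat_adjoint (block_diag A B) = block_diag (mat_adjoint A) (mat_adjoint B)"
  unfolding block_diag_def by (subst mat_adjoint_four_block_mat[of _ N N]) auto

lemma mat_adjoint_block_antidiag:
  fixes A B :: "complex mat"
  shows "A \<in> carrier_mat N N \<Longrightarrow> B \<in> carrier_mat N N \<Longrightarrow>
    mat_adjoint (block_antidiag A B) = block_antidiag (mat_adjoint B) (mat_adjoint A)"
  unfolding block_antidiag_def by (subst mat_adjoint_four_block_mat[of _ N N]) auto

end

(*
  Instances of the dimension-generic matrix rules for N x N blocks: once N is fixed, the
  simplifier can discharge their carrier side conditions.
*)
lemmas block_mat_simps =
  block_diag_mult_block_diag block_diag_mult_block_antidiag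
  block_antidiag_mult_block_diag block_antidiag_mult_block_antidiag
  smult_block_diag smult_block_antidiag mat_adjoint_block_diag mat_adjoint_block_antidiag
  mult_smult_assoc_mat[where nr = N and n = N and nc = N for N]
  mult_smult_distrib[where nr = N and n = N and nc = N for N]
  mult_carrier_mat[where nr = N and n = N and nc = N for N]
  assoc_mult_mat[where n\<^sub>1 = N and n\<^sub>2 = N and n\<^sub>3 = N and n\<^sub>4 = N for N]
  mat_adjoint_mult[where nr = N and n = N and nc = N for N]
  left_mult_one_mat[where nr = N and nc = N for N] right_mult_one_mat[where nr = N and nc = N for N]
  left_mult_zero_mat[where n = N and nc = N for N] right_mult_zero_mat[where nr = N and n = N for N]

lemma kron_eq_four_block_mat:
  assumes A: "A \<in> carrier_mat 2 2" and P: "P \<in> carrier_mat N N"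
  shows "kron A P = four_block_mat (A $$ (0, 0) \<cdot>\<^sub>m P) (A $$ (0, 1) \<cdot>\<^sub>m P)
                                   (A $$ (1, 0) \<cdot>\<^sub>m P) (A $$ (1, 1) \<cdot>\<^sub>m P)"
    (is "_ = ?M")
proof (rule eq_matI)
  fix i j
  assume "i < dim_row ?M" "j < dim_col ?M"
  then have ij: "i < N + N" "j < N + N"
    using P by auto
  then have "(i < N \<and> i div N = 0 \<and> i mod N = i) \<or> (\<not> i < N \<and> i div N = 1 \<and> i mod N = i - N)"
    and "(j < N \<and> j div N = 0 \<and> j mod N = j) \<or> (\<not> j < N \<and> j div N = 1 \<and> j mod N = j - N)"
    by (auto simp: div_if mod_if)
  with A P ij show "kron A P $$ (i, j) = ?M $$ (i, j)"
    unfolding kron_def by auto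
qed (use A P in \<open>auto simp: kron_def\<close>)

lemma pauli_matrices_carrier [simp]:
  "pauli_I \<in> carrier_mat 2 2" "pauli_X \<in> carrier_mat 2 2"
  "pauli_Y \<in> carrier_mat 2 2" "pauli_Z \<in> carrier_mat 2 2"
  unfolding pauli_I_def pauli_X_def pauli_Y_def pauli_Z_def
  by (simp_all add: mat_of_rows_list_def carrier_matI)

lemma ket_bra_carrier [simp]: "ket0bra0 \<in> carrier_mat 2 2" "ket1bra1 \<in> carrier_mat 2 2"
  unfolding ket0bra0_def ket1bra1_def by (simp_all add: mat_of_rows_list_def carrier_matI)

context
  fixes P :: "complex mat" and N :: nat
  assumes P: "P \<in> carrier_mat N N"
begin

lemma kron_pauli_I: "kron pauli_I P = block_diag P P"
  unfolding kron_eq_four_block_mat[OF pauli_matrices_carrier(1) P]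
  using P by (simp add: block_diag_def pauli_I_def mat_of_rows_list_def)

lemma kron_pauli_Z: "kron pauli_Z P = block_diag P ((-1) \<cdot>\<^sub>m P)"
  unfolding kron_eq_four_block_mat[OF pauli_matrices_carrier(4) P]
  using P by (simp add: block_diag_def pauli_Z_def mat_of_rows_list_def)

lemma kron_pauli_X: "kron pauli_X P = block_antidiag P P"
  unfolding kron_eq_four_block_mat[OF pauli_matrices_carrier(2) P]
  using P by (simp add: block_antidiag_def pauli_X_def mat_of_rows_list_def)

lemma kron_pauli_Y: "kron pauli_Y P = block_antidiag ((-\<i>) \<cdot>\<^sub>m P) (\<i> \<cdot>\<^sub>m P)"
  unfolding kron_eq_four_block_mat[OF pauli_matrices_carrier(3) P]
  using P by (simp add: block_antidiag_def pauli_Y_def mat_of_rows_list_def)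

lemma kron_ket0bra0: "kron ket0bra0 P = block_diag P (0\<^sub>m N N)"
  unfolding kron_eq_four_block_mat[OF ket_bra_carrier(1) P]
  using P by (simp add: block_diag_def ket0bra0_def mat_of_rows_list_def)

lemma kron_ket1bra1: "kron ket1bra1 P = block_diag (0\<^sub>m N N) P"
  unfolding kron_eq_four_block_mat[OF ket_bra_carrier(2) P]
  using P by (simp add: block_diag_def ket1bra1_def mat_of_rows_list_def)

end

section \<open>The Pauli group\<close>

lemma kron_smult_right: "kron A (c \<cdot>\<^sub>m B) = c \<cdot>\<^sub>m kron A B"
proof (rule eq_matI)
  fix i j
  assume "i < dim_row (c \<cdot>\<^sub>m kron A B)" "j < dim_col (c \<cdot>\<^sub>m kron A B)"
  then have "i mod dim_row B < dim_row B" "j mod dim_col B < dim_col B"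
    by (auto simp: kron_def intro!: mod_less_divisor gr0I)
  then show "kron A (c \<cdot>\<^sub>m B) $$ (i, j) = (c \<cdot>\<^sub>m kron A B) $$ (i, j)"
    using \<open>i < _\<close> \<open>j < _\<close> by (simp add: kron_def)
qed (simp_all add: kron_def)

lemma tensor_list_carrier:
  "set ps \<subseteq> single_paulis \<Longrightarrow> tensor_list ps \<in> carrier_mat (2 ^ length ps) (2 ^ length ps)"
proof (induction ps)
  case (Cons A ps)
  then have "A \<in> carrier_mat 2 2"
    by (auto simp: single_paulis_def)
  with Cons show ?case
    by (auto simp: kron_def)
qed simp

lemma pauli_groupI:
  "c \<in> {1, -1, \<i>, -\<i>} \<Longrightarrow> length ps = n \<Longrightarrow> set ps \<subseteq> single_paulis \<Longrightarrow>
    c \<cdot>\<^sub>m tensor_list ps \<in> pauli_group n"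
  unfolding pauli_group_def by blast

lemma pauli_groupE:
  assumes "P \<in> pauli_group n"
  obtains c ps where "c \<in> {1, -1, \<i>, -\<i>}" "length ps = n" "set ps \<subseteq> single_paulis"
    "P = c \<cdot>\<^sub>m tensor_list ps"
  using assms unfolding pauli_group_def by blast

lemma pauli_group_carrier: "P \<in> pauli_group n \<Longrightarrow> P \<in> carrier_mat (2 ^ n) (2 ^ n)"
  by (elim pauli_groupE) (auto dest: tensor_list_carrier)

lemma pauli_group_0: "pauli_group 0 = {c \<cdot>\<^sub>m 1\<^sub>m 1 | c. c \<in> {1, -1, \<i>, -\<i>}}"
  unfolding pauli_group_def by auto

lemma pauli_group_smult:
  assumes "P \<in> pauli_group n" "c \<in> {1, -1, \<i>, -\<i>}"
  shows "c \<cdot>\<^sub>m P \<in> pauli_group n"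
proof -
  obtain d ps where "d \<in> {1, -1, \<i>, -\<i>}" "length ps = n" "set ps \<subseteq> single_paulis"
    and P: "P = d \<cdot>\<^sub>m tensor_list ps"
    using assms(1) by (rule pauli_groupE)
  moreover have "c * d \<in> {1, -1, \<i>, -\<i>}"
    using assms(2) \<open>d \<in> _\<close> by auto
  ultimately show ?thesis
    using pauli_groupI[of "c * d" ps n] by simp
qed

lemma pauli_group_Suc:
  "pauli_group (Suc n) = {kron A R | A R. A \<in> single_paulis \<and> R \<in> pauli_group n}"
proof (intro equalityI subsetI)
  fix M
  assume "M \<in> pauli_group (Suc n)"
  then obtain c ps where c: "c \<in> {1, -1, \<i>, -\<i>}" and ps: "length ps = Suc n" "set ps \<subseteq> single_paulis"
    and M: "M = c \<cdot>\<^sub>m tensor_list ps"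
    by (rule pauli_groupE)
  then obtain A qs where "ps = A # qs"
    by (cases ps) auto
  with ps M have "M = kron A (c \<cdot>\<^sub>m tensor_list qs)" "A \<in> single_paulis"
    "c \<cdot>\<^sub>m tensor_list qs \<in> pauli_group n"
    using pauli_groupI[OF c, of qs n] by (auto simp: kron_smult_right)
  then show "M \<in> {kron A R | A R. A \<in> single_paulis \<and> R \<in> pauli_group n}"
    by blast
next
  fix M
  assume "M \<in> {kron A R | A R. A \<in> single_paulis \<and> R \<in> pauli_group n}"
  then obtain A R where A: "A \<in> single_paulis" and R: "R \<in> pauli_group n" and M: "M = kron A R"
    by blast
  from R obtain c ps where "c \<in> {1, -1, \<i>, -\<i>}" "length ps = n" "set ps \<subseteq> single_paulis"
    and "R = c \<cdot>\<^sub>m tensor_list ps"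
    by (rule pauli_groupE)
  with A M show "M \<in> pauli_group (Suc n)"
    using pauli_groupI[of c "A # ps" "Suc n"] by (simp add: kron_smult_right)
qed

definition signs :: "complex set" where
  "signs = {1, -1}"

lemma signs_mult [simp]: "a \<in> signs \<Longrightarrow> b \<in> signs \<Longrightarrow> a * b \<in> signs"
  unfolding signs_def by auto

lemma signs_one [simp]: "1 \<in> signs" "- 1 \<in> signs"
  unfolding signs_def by auto

lemma signs_cnj [simp]: "a \<in> signs \<Longrightarrow> cnj a = a"
  unfolding signs_def by auto

lemma signs_square [simp]: "a \<in> signs \<Longrightarrow> a * a = 1"
  unfolding signs_def by auto

lemma signs_square_left [simp]: "a \<in> signs \<Longrightarrow> a * (a * b) = b"
  unfolding signs_def by auto

lemma pauli_group_smult_sign: "P \<in> pauli_group n \<Longrightarrow> a \<in> signs \<Longrightarrow> a \<cdot>\<^sub>m P \<in> pauli_group n"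
  using pauli_group_smult unfolding signs_def by blast

lemma kron_in_pauli_group: "A \<in> single_paulis \<Longrightarrow> R \<in> pauli_group n \<Longrightarrow> kron A R \<in> pauli_group (Suc n)"
  unfolding pauli_group_Suc by blast

lemma block_diag_in_pauli_group:
  assumes R: "R \<in> pauli_group n" and ab: "a \<in> signs" "b \<in> signs"
  shows "block_diag (a \<cdot>\<^sub>m R) (b \<cdot>\<^sub>m R) \<in> pauli_group (Suc n)"
proof -
  have "R \<in> carrier_mat (2 ^ n) (2 ^ n)"
    using R by (rule pauli_group_carrier)
  then have aR: "a \<cdot>\<^sub>m R \<in> pauli_group n" "a \<cdot>\<^sub>m R \<in> carrier_mat (2 ^ n) (2 ^ n)"
    using R ab by (auto intro: pauli_group_smult_sign)
  consider "b = a" | "b = - a"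
    using ab unfolding signs_def by auto
  then show ?thesis
  proof cases
    case 1
    then show ?thesis
      using kron_in_pauli_group[OF _ aR(1), of pauli_I] aR(2)
      by (simp add: kron_pauli_I single_paulis_def)
  next
    case 2
    then show ?thesis
      using kron_in_pauli_group[OF _ aR(1), of pauli_Z] aR(2)
      by (simp add: kron_pauli_Z single_paulis_def)
  qed
qed

lemma block_antidiag_in_pauli_group:
  assumes R: "R \<in> pauli_group n" and ab: "a \<in> signs" "b \<in> signs"
  shows "block_antidiag (a \<cdot>\<^sub>m R) (b \<cdot>\<^sub>m R) \<in> pauli_group (Suc n)"
proof -
  have "R \<in> carrier_mat (2 ^ n) (2 ^ n)"
    using R by (rule pauli_group_carrier)
  then have aR: "a \<cdot>\<^sub>m R \<in> pauli_group n" "a \<cdot>\<^sub>m R \<in> carrier_mat (2 ^ n) (2 ^ n)"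
    and iaR: "(\<i> * a) \<cdot>\<^sub>m R \<in> pauli_group n" "(\<i> * a) \<cdot>\<^sub>m R \<in> carrier_mat (2 ^ n) (2 ^ n)"
    using R ab by (auto intro: pauli_group_smult simp: signs_def)
  consider "b = a" | "b = - a"
    using ab unfolding signs_def by auto
  then show ?thesis
  proof cases
    case 1
    then show ?thesis
      using kron_in_pauli_group[OF _ aR(1), of pauli_X] aR(2)
      by (simp add: kron_pauli_X single_paulis_def)
  next
    case 2
    have "- \<i> * (\<i> * a) = a" "\<i> * (\<i> * a) = - a"
      by (simp_all add: mult.assoc[symmetric])
    with 2 show ?thesis
      using kron_in_pauli_group[OF _ iaR(1), of pauli_Y] iaR(2)
      by (simp add: kron_pauli_Y single_paulis_def)
  qed
qed

(*
  Each diagonal block carries its own sign, so that products, adjoints and scalar multiples of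
  such block matrices are again of this shape with no further normalisation.
*)
lemma pauli_group_SucE:
  assumes "M \<in> pauli_group (Suc n)"
  obtains (diag) a b R where "R \<in> pauli_group n" "a \<in> signs" "b \<in> signs"
      "M = block_diag (a \<cdot>\<^sub>m R) (b \<cdot>\<^sub>m R)"
  | (antidiag) a b R where "R \<in> pauli_group n" "a \<in> signs" "b \<in> signs"
      "M = block_antidiag (a \<cdot>\<^sub>m R) (b \<cdot>\<^sub>m R)"
proof -
  obtain A R where A: "A \<in> single_paulis" and R: "R \<in> pauli_group n" and M: "M = kron A R"
    using assms unfolding pauli_group_Suc by blast
  have iR: "\<i> \<cdot>\<^sub>m R \<in> pauli_group n"
    using R by (auto intro: pauli_group_smult)
  have Rc: "R \<in> carrier_mat (2 ^ n) (2 ^ n)"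
    using R by (rule pauli_group_carrier)
  from A consider "A = pauli_I" | "A = pauli_Z" | "A = pauli_X" | "A = pauli_Y"
    unfolding single_paulis_def by blast
  then show ?thesis
  proof cases
    case 1
    then show ?thesis
      using diag[OF R, of 1 1] by (simp add: M kron_pauli_I[where N="2 ^ n"] Rc)
  next
    case 2
    then show ?thesis
      using diag[OF R, of 1 "-1"] by (simp add: M kron_pauli_Z[where N="2 ^ n"] Rc)
  next
    case 3
    then show ?thesis
      using antidiag[OF R, of 1 1] by (simp add: M kron_pauli_X[where N="2 ^ n"] Rc)
  next
    case 4
    then show ?thesis
      using antidiag[OF iR, of "-1" 1] by (simp add: M kron_pauli_Y[where N="2 ^ n"] Rc)
  qed
qed

lemma pauli_group_mult: "P \<in> pauli_group n \<Longrightarrow> Q \<in> pauli_group n \<Longrightarrow> P * Q \<in> pauli_group n"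
proof (induction n arbitrary: P Q)
  case 0
  then obtain c where "c \<in> {1, -1, \<i>, -\<i>}" "P = c \<cdot>\<^sub>m 1\<^sub>m 1"
    by (auto simp: pauli_group_0)
  moreover have "Q \<in> carrier_mat 1 1"
    using 0 pauli_group_carrier by fastforce
  ultimately show ?case
    using pauli_group_smult[OF \<open>Q \<in> pauli_group 0\<close>] by (simp add: mult_smult_assoc_mat[of _ 1 1])
next
  case (Suc n)
  from Suc.prems show ?case
    by (elim pauli_group_SucE)
      (simp_all add: block_mat_simps[where N="2 ^ n"] pauli_group_carrier
        block_diag_in_pauli_group block_antidiag_in_pauli_group Suc.IH)
qed

lemma one_in_pauli_group: "1\<^sub>m (2 ^ n) \<in> pauli_group n"
proof (induction n)
  case 0
  show ?case
    using pauli_groupI[of 1 "[]" 0] by simp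
next
  case (Suc n)
  then show ?case
    using block_diag_in_pauli_group[OF Suc signs_one(1) signs_one(1)]
    by (simp add: block_diag_one mult_2)
qed

lemma pauli_group_mult_adjoint: "P \<in> pauli_group n \<Longrightarrow> P * mat_adjoint P = 1\<^sub>m (2 ^ n)"
proof (induction n arbitrary: P)
  case 0
  then obtain c where "c \<in> {1, -1, \<i>, -\<i>}" "P = c \<cdot>\<^sub>m 1\<^sub>m 1"
    by (auto simp: pauli_group_0)
  then show ?case
    by (auto simp: smult_mult_smult_mat[of _ 1 1])
next
  case (Suc n)
  from Suc.prems show ?case
    by (elim pauli_group_SucE)
      (simp_all add: block_mat_simps[where N="2 ^ n"] pauli_group_carrier Suc.IH block_diag_one mult_2)
qed

lemma pauli_group_adjoint_sign: "P \<in> pauli_group n \<Longrightarrow> \<exists>d \<in> signs. mat_adjoint P = d \<cdot>\<^sub>m P"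
proof (induction n arbitrary: P)
  case 0
  then obtain c where c: "c \<in> {1, -1, \<i>, -\<i>}" and P: "P = c \<cdot>\<^sub>m 1\<^sub>m 1"
    by (auto simp: pauli_group_0)
  from c consider "c \<in> signs" | "c \<in> {\<i>, -\<i>}"
    unfolding signs_def by auto
  then show ?case
  proof cases
    case 1
    then show ?thesis
      by (intro bexI[of _ 1]) (simp_all add: P)
  next
    case 2
    then show ?thesis
      by (intro bexI[of _ "-1"]) (auto simp: P)
  qed
next
  case (Suc n)
  from Suc.prems show ?case
  proof (cases rule: pauli_group_SucE)
    case (diag a b R)
    then obtain d where "d \<in> signs" "mat_adjoint R = d \<cdot>\<^sub>m R"
      using Suc.IH by blast
    with diag show ?thesis
      by (intro bexI[of _ d])
        (simp_all add: block_mat_simps[where N="2 ^ n"] pauli_group_carrier mult.commute)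
  next
    case (antidiag a b R)
    then obtain d where "d \<in> signs" "mat_adjoint R = d \<cdot>\<^sub>m R"
      using Suc.IH by blast
    with antidiag show ?thesis
      by (intro bexI[of _ "a * b * d"])
        (simp_all add: block_mat_simps[where N="2 ^ n"] pauli_group_carrier ac_simps)
  qed
qed

lemma pauli_group_adjoint: "P \<in> pauli_group n \<Longrightarrow> mat_adjoint P \<in> pauli_group n"
  using pauli_group_adjoint_sign pauli_group_smult_sign by metis

lemma pauli_group_adjoint_mult: "P \<in> pauli_group n \<Longrightarrow> mat_adjoint P * P = 1\<^sub>m (2 ^ n)"
  using pauli_group_mult_adjoint[OF pauli_group_adjoint] by simp

lemma pauli_group_commute_sign:
  "P \<in> pauli_group n \<Longrightarrow> Q \<in> pauli_group n \<Longrightarrow> \<exists>e \<in> signs. P * Q = e \<cdot>\<^sub>m (Q * P)"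
proof (induction n arbitrary: P Q)
  case 0
  then obtain c d where "P = c \<cdot>\<^sub>m 1\<^sub>m 1" "Q = d \<cdot>\<^sub>m 1\<^sub>m 1"
    by (auto simp: pauli_group_0)
  then show ?case
    by (intro bexI[of _ 1]) (simp_all add: smult_mult_smult_mat[of _ 1 1 _ 1] mult.commute)
next
  case (Suc n)
  note simps = block_mat_simps[where N="2 ^ n"] pauli_group_carrier ac_simps
  from Suc.prems(1) show ?case
  proof (cases rule: pauli_group_SucE)
    case (diag a b R)
    note P = this
    from Suc.prems(2) show ?thesis
    proof (cases rule: pauli_group_SucE)
      case (diag c d S)
      with P obtain e where "e \<in> signs" "R * S = e \<cdot>\<^sub>m (S * R)"
        using Suc.IH by blast
      with P diag show ?thesis
        by (intro bexI[of _ e]) (simp_all add: simps)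
    next
      case (antidiag c d S)
      with P obtain e where "e \<in> signs" "R * S = e \<cdot>\<^sub>m (S * R)"
        using Suc.IH by blast
      with P antidiag show ?thesis
        by (intro bexI[of _ "a * b * e"]) (simp_all add: simps)
    qed
  next
    case (antidiag a b R)
    note P = this
    from Suc.prems(2) show ?thesis
    proof (cases rule: pauli_group_SucE)
      case (diag c d S)
      with P obtain e where "e \<in> signs" "R * S = e \<cdot>\<^sub>m (S * R)"
        using Suc.IH by blast
      with P diag show ?thesis
        by (intro bexI[of _ "c * d * e"]) (simp_all add: simps)
    next
      case (antidiag c d S)
      with P obtain e where "e \<in> signs" "R * S = e \<cdot>\<^sub>m (S * R)"
        using Suc.IH by blast
      with P antidiag show ?thesis
        by (intro bexI[of _ "a * b * c * d * e"]) (simp_all add: simps)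
    qed
  qed
qed

section \<open>The Clifford group\<close>

lemma unitary_n_Suc:
  "unitary_n (Suc n) M \<longleftrightarrow>
    M \<in> carrier_mat (2 ^ n + 2 ^ n) (2 ^ n + 2 ^ n) \<and> M * mat_adjoint M = 1\<^sub>m (2 ^ n + 2 ^ n)"
  unfolding unitary_n_def by (simp add: mult_2)

lemma unitary_n_adjoint_mult: "unitary_n n U \<Longrightarrow> mat_adjoint U * U = 1\<^sub>m (2 ^ n)"
  unfolding unitary_n_def by (auto intro: mat_mult_left_right_inverse)

lemma unitary_n_mult:
  assumes "unitary_n n A" "unitary_n n B"
  shows "unitary_n n (A * B)"
proof -
  have A: "A \<in> carrier_mat (2 ^ n) (2 ^ n)" and B: "B \<in> carrier_mat (2 ^ n) (2 ^ n)"
    using assms unfolding unitary_n_def by auto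
  then have "A * B * mat_adjoint (A * B) = A * (B * mat_adjoint B) * mat_adjoint A"
    by (simp add: block_mat_simps[where N="2 ^ n"])
  also have "\<dots> = 1\<^sub>m (2 ^ n)"
    using assms A unfolding unitary_n_def by simp
  finally show ?thesis
    using A B unfolding unitary_n_def by simp
qed

lemma pauli_group_unitary: "P \<in> pauli_group n \<Longrightarrow> unitary_n n P"
  unfolding unitary_n_def using pauli_group_carrier pauli_group_mult_adjoint by blast

lemma clifford_hier_2_iff:
  "V \<in> clifford_hier n 2 \<longleftrightarrow>
    unitary_n n V \<and> (\<forall>P \<in> pauli_group n. V * P * mat_adjoint V \<in> pauli_group n)"
  by (simp add: numeral_2_eq_2)

lemma clifford_hier_3_iff:
  "V \<in> clifford_hier n 3 \<longleftrightarrow>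
    unitary_n n V \<and> (\<forall>P \<in> pauli_group n. V * P * mat_adjoint V \<in> clifford_hier n 2)"
  by (simp add: numeral_3_eq_3 numeral_2_eq_2)

lemma pauli_in_clifford: "P \<in> pauli_group n \<Longrightarrow> P \<in> clifford_hier n 2"
  unfolding clifford_hier_2_iff
  by (auto intro: pauli_group_unitary pauli_group_mult pauli_group_adjoint)

lemma clifford_mult:
  assumes V: "V \<in> clifford_hier n 2" and W: "W \<in> clifford_hier n 2"
  shows "V * W \<in> clifford_hier n 2"
  unfolding clifford_hier_2_iff
proof (intro conjI ballI)
  show "unitary_n n (V * W)"
    using V W unfolding clifford_hier_2_iff by (blast intro: unitary_n_mult)
next
  fix P
  assume P: "P \<in> pauli_group n"
  have "V \<in> carrier_mat (2 ^ n) (2 ^ n)" "W \<in> carrier_mat (2 ^ n) (2 ^ n)"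
    using V W unfolding clifford_hier_2_iff unitary_n_def by auto
  with P have "V * W * P * mat_adjoint (V * W) = V * (W * P * mat_adjoint W) * mat_adjoint V"
    by (simp add: block_mat_simps[where N="2 ^ n"] pauli_group_carrier)
  then show "V * W * P * mat_adjoint (V * W) \<in> pauli_group n"
    using V W P unfolding clifford_hier_2_iff by simp
qed

lemma clifford_adjoint_if_square_pauli:
  assumes U: "U \<in> clifford_hier n 2" and UU: "U * U \<in> pauli_group n"
  shows "mat_adjoint U \<in> clifford_hier n 2"
proof -
  have "U \<in> carrier_mat (2 ^ n) (2 ^ n)" "mat_adjoint U * U = 1\<^sub>m (2 ^ n)"
    using U unfolding clifford_hier_2_iff by (auto simp: unitary_n_def intro: unitary_n_adjoint_mult)
  then have "mat_adjoint (U * U) * U = mat_adjoint U"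
    by (simp add: block_mat_simps[where N="2 ^ n"])
  then show ?thesis
    using clifford_mult[OF pauli_in_clifford[OF pauli_group_adjoint[OF UU]] U] by simp
qed

lemma block_diag_same_in_clifford:
  assumes V: "V \<in> clifford_hier n 2"
  shows "block_diag V V \<in> clifford_hier (Suc n) 2"
  unfolding clifford_hier_2_iff
proof (intro conjI ballI)
  have "V \<in> carrier_mat (2 ^ n) (2 ^ n)" "V * mat_adjoint V = 1\<^sub>m (2 ^ n)"
    using V unfolding clifford_hier_2_iff unitary_n_def by auto
  note simps = this block_mat_simps[where N="2 ^ n"] pauli_group_carrier
  show "unitary_n (Suc n) (block_diag V V)"
    unfolding unitary_n_Suc by (simp add: simps block_diag_one)
  fix Q
  assume "Q \<in> pauli_group (Suc n)"
  then show "block_diag V V * Q * mat_adjoint (block_diag V V) \<in> pauli_group (Suc n)"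
  proof (cases rule: pauli_group_SucE)
    case (diag a b R)
    then have "V * R * mat_adjoint V \<in> pauli_group n"
      using V unfolding clifford_hier_2_iff by blast
    with diag show ?thesis
      by (simp add: simps block_diag_in_pauli_group)
  next
    case (antidiag a b R)
    then have "V * R * mat_adjoint V \<in> pauli_group n"
      using V unfolding clifford_hier_2_iff by blast
    with antidiag show ?thesis
      by (simp add: simps block_antidiag_in_pauli_group)
  qed
qed

lemma block_antidiag_one_in_pauli_group:
  "block_antidiag (1\<^sub>m (2 ^ n)) (1\<^sub>m (2 ^ n)) \<in> pauli_group (Suc n)"
  using block_antidiag_in_pauli_group[OF one_in_pauli_group signs_one(1) signs_one(1)] by simp

lemma block_antidiag_in_pauli_groupD:
  assumes M: "block_antidiag A B \<in> pauli_group (Suc n)"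
    and A: "A \<in> carrier_mat (2 ^ n) (2 ^ n)" and B: "B \<in> carrier_mat (2 ^ n) (2 ^ n)"
  shows "A \<in> pauli_group n \<and> B \<in> pauli_group n"
  using M
proof (cases rule: pauli_group_SucE)
  case (diag a b R)
  then have "a \<cdot>\<^sub>m R = 0\<^sub>m (2 ^ n) (2 ^ n)"
    using A B block_antidiag_eq_block_diagD[of A "2 ^ n" B "a \<cdot>\<^sub>m R" "b \<cdot>\<^sub>m R"]
    by (simp add: pauli_group_carrier)
  moreover have "R = a \<cdot>\<^sub>m (a \<cdot>\<^sub>m R)"
    using diag by simp
  ultimately have "R = 0\<^sub>m (2 ^ n) (2 ^ n)"
    by simp
  then have "(1\<^sub>m (2 ^ n) :: complex mat) = 0\<^sub>m (2 ^ n) (2 ^ n)"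
    using pauli_group_mult_adjoint[OF diag(1)] by (simp add: block_mat_simps[where N="2 ^ n"])
  then have "(1\<^sub>m (2 ^ n) :: complex mat) $$ (0, 0) = 0\<^sub>m (2 ^ n) (2 ^ n) $$ (0, 0)"
    by simp
  then show ?thesis
    by simp
next
  case (antidiag a b R)
  then have "A = a \<cdot>\<^sub>m R" "B = b \<cdot>\<^sub>m R"
    using antidiag A B by (simp_all add: block_antidiag_eq_iff[where N="2 ^ n"] pauli_group_carrier)
  with antidiag show ?thesis
    by (auto intro: pauli_group_smult_sign)
qed

lemma controlled_pauli_in_clifford:
  assumes T: "T \<in> pauli_group n"
  shows "block_diag (1\<^sub>m (2 ^ n)) T \<in> clifford_hier (Suc n) 2"
  unfolding clifford_hier_2_iff
proof (intro conjI ballI)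
  obtain d where d: "d \<in> signs" "mat_adjoint T = d \<cdot>\<^sub>m T"
    using pauli_group_adjoint_sign[OF T] by blast
  have TT: "T * mat_adjoint T = 1\<^sub>m (2 ^ n)"
    using T by (rule pauli_group_mult_adjoint)
  note simps = block_mat_simps[where N="2 ^ n"] pauli_group_carrier T
  show "unitary_n (Suc n) (block_diag (1\<^sub>m (2 ^ n)) T)"
    unfolding unitary_n_Suc using TT by (simp add: simps block_diag_one)
  fix Q
  assume "Q \<in> pauli_group (Suc n)"
  then show "block_diag (1\<^sub>m (2 ^ n)) T * Q * mat_adjoint (block_diag (1\<^sub>m (2 ^ n)) T)
      \<in> pauli_group (Suc n)"
  proof (cases rule: pauli_group_SucE)
    case (diag a b R)
    obtain e where "e \<in> signs" "T * R = e \<cdot>\<^sub>m (R * T)"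
      using pauli_group_commute_sign[OF T diag(1)] by blast
    have "T * (R * mat_adjoint T) = (T * R) * mat_adjoint T"
      using diag(1) by (simp add: simps)
    also have "\<dots> = e \<cdot>\<^sub>m R"
      using diag(1) TT \<open>T * R = _\<close> by (simp add: simps)
    finally have "T * (R * mat_adjoint T) = e \<cdot>\<^sub>m R" .
    with diag \<open>e \<in> signs\<close> show ?thesis
      by (simp add: simps block_diag_in_pauli_group)
  next
    case (antidiag a b R)
    obtain e where "e \<in> signs" "T * R = e \<cdot>\<^sub>m (R * T)"
      using pauli_group_commute_sign[OF T antidiag(1)] by blast
    with antidiag d show ?thesis
      by (simp add: simps block_antidiag_in_pauli_group pauli_group_mult)
  qed
qed

lemma block_diag_in_clifford:
  assumes V: "V \<in> clifford_hier n 2" and B: "B \<in> carrier_mat (2 ^ n) (2 ^ n)"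
    and VB: "mat_adjoint V * B \<in> pauli_group n"
  shows "block_diag V B \<in> clifford_hier (Suc n) 2"
proof -
  have "V \<in> carrier_mat (2 ^ n) (2 ^ n)" and VV: "V * mat_adjoint V = 1\<^sub>m (2 ^ n)"
    using V unfolding clifford_hier_2_iff unitary_n_def by auto
  note simps = \<open>V \<in> carrier_mat (2 ^ n) (2 ^ n)\<close> block_mat_simps[where N="2 ^ n"] B
  have "V * (mat_adjoint V * B) = (V * mat_adjoint V) * B"
    by (simp add: simps)
  then have "block_diag V B = block_diag V V * block_diag (1\<^sub>m (2 ^ n)) (mat_adjoint V * B)"
    using VV by (simp add: simps)
  then show ?thesis
    using clifford_mult[OF block_diag_same_in_clifford[OF V] controlled_pauli_in_clifford[OF VB]] by simp
qed

lemma block_antidiag_in_clifford: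
  assumes V: "V \<in> clifford_hier n 2" and B: "B \<in> carrier_mat (2 ^ n) (2 ^ n)"
    and VB: "mat_adjoint V * B \<in> pauli_group n"
  shows "block_antidiag V B \<in> clifford_hier (Suc n) 2"
proof -
  have "V \<in> carrier_mat (2 ^ n) (2 ^ n)"
    using V unfolding clifford_hier_2_iff unitary_n_def by auto
  then have "block_antidiag V B = block_diag V B * block_antidiag (1\<^sub>m (2 ^ n)) (1\<^sub>m (2 ^ n))"
    using B by (simp add: block_mat_simps[where N="2 ^ n"])
  then show ?thesis
    using clifford_mult[OF block_diag_in_clifford[OF assms]
        pauli_in_clifford[OF block_antidiag_one_in_pauli_group]]
    by simp
qed

lemma block_diag_in_cliffordD:
  assumes M: "block_diag A B \<in> clifford_hier (Suc n) 2"
    and A: "A \<in> carrier_mat (2 ^ n) (2 ^ n)" and B: "B \<in> carrier_mat (2 ^ n) (2 ^ n)"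
  shows "B * mat_adjoint A \<in> pauli_group n"
proof -
  have "block_diag A B * block_antidiag (1\<^sub>m (2 ^ n)) (1\<^sub>m (2 ^ n)) * mat_adjoint (block_diag A B) =
      block_antidiag (A * mat_adjoint B) (B * mat_adjoint A)"
    using A B by (simp add: block_mat_simps[where N="2 ^ n"])
  moreover have "block_diag A B * block_antidiag (1\<^sub>m (2 ^ n)) (1\<^sub>m (2 ^ n)) * mat_adjoint (block_diag A B)
      \<in> pauli_group (Suc n)"
    using M block_antidiag_one_in_pauli_group unfolding clifford_hier_2_iff by blast
  ultimately have "block_antidiag (A * mat_adjoint B) (B * mat_adjoint A) \<in> pauli_group (Suc n)"
    by simp
  moreover have "A * mat_adjoint B \<in> carrier_mat (2 ^ n) (2 ^ n)"
    "B * mat_adjoint A \<in> carrier_mat (2 ^ n) (2 ^ n)"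
    using A B by (simp_all add: block_mat_simps[where N="2 ^ n"])
  ultimately show ?thesis
    using block_antidiag_in_pauli_groupD by blast
qed

lemma block_antidiag_in_cliffordD:
  assumes M: "block_antidiag A B \<in> clifford_hier (Suc n) 2"
    and A: "A \<in> carrier_mat (2 ^ n) (2 ^ n)" and B: "B \<in> carrier_mat (2 ^ n) (2 ^ n)"
  shows "B * mat_adjoint A \<in> pauli_group n"
proof -
  have "block_diag A B = block_antidiag A B * block_antidiag (1\<^sub>m (2 ^ n)) (1\<^sub>m (2 ^ n))"
    using A B by (simp add: block_mat_simps[where N="2 ^ n"])
  then have "block_diag A B \<in> clifford_hier (Suc n) 2"
    using clifford_mult[OF M pauli_in_clifford[OF block_antidiag_one_in_pauli_group]] by simp
  from this A B show ?thesis
    by (rule block_diag_in_cliffordD)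
qed

section \<open>Controlled unitaries\<close>

lemma controlled_eq_block_diag:
  assumes "U \<in> carrier_mat (2 ^ n) (2 ^ n)"
  shows "controlled n U = block_diag (1\<^sub>m (2 ^ n)) U"
  using assms unfolding controlled_def
  by (simp add: kron_ket0bra0[where N="2 ^ n"] kron_ket1bra1[where N="2 ^ n"] block_diag_def
      add_four_block_mat[of _ "2 ^ n" "2 ^ n" _ "2 ^ n" _ "2 ^ n"])

lemma controlled_in_clifford_iff:
  assumes U: "U \<in> carrier_mat (2 ^ n) (2 ^ n)"
  shows "controlled n U \<in> clifford_hier (Suc n) 2 \<longleftrightarrow> U \<in> pauli_group n"
  using block_diag_in_cliffordD[of "1\<^sub>m (2 ^ n)" U n] controlled_pauli_in_clifford[of U n] U
  by (auto simp: controlled_eq_block_diag)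

lemma controlled_in_clifford_hier_3D:
  assumes U: "unitary_n n U" and C: "controlled n U \<in> clifford_hier (Suc n) 3"
  shows "U \<in> clifford_hier n 2 \<and> U * U \<in> pauli_group n"
proof -
  have Uc: "U \<in> carrier_mat (2 ^ n) (2 ^ n)"
    using U unfolding unitary_n_def by simp
  note simps = Uc block_mat_simps[where N="2 ^ n"] pauli_group_carrier
  have conj: "block_diag (1\<^sub>m (2 ^ n)) U * Q * mat_adjoint (block_diag (1\<^sub>m (2 ^ n)) U)
      \<in> clifford_hier (Suc n) 2" if "Q \<in> pauli_group (Suc n)" for Q
    using C that unfolding clifford_hier_3_iff controlled_eq_block_diag[OF Uc] by blast
  have "block_antidiag (mat_adjoint U) U \<in> clifford_hier (Suc n) 2"
    using conj[OF block_antidiag_one_in_pauli_group] by (simp add: simps)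
  then have "U * U \<in> pauli_group n"
    using block_antidiag_in_cliffordD[of "mat_adjoint U" U n] Uc by simp
  moreover have "U * P * mat_adjoint U \<in> pauli_group n" if P: "P \<in> pauli_group n" for P
  proof -
    have "block_diag P (U * P * mat_adjoint U) \<in> clifford_hier (Suc n) 2"
      using conj[OF block_diag_in_pauli_group[OF P signs_one(1) signs_one(1)]] P by (simp add: simps)
    then have "U * P * mat_adjoint U * mat_adjoint P \<in> pauli_group n"
      using block_diag_in_cliffordD[of P "U * (P * mat_adjoint U)" n] P by (simp add: simps)
    then have "U * P * mat_adjoint U * mat_adjoint P * P \<in> pauli_group n"
      using P by (rule pauli_group_mult)
    then show ?thesis
      using P pauli_group_adjoint_mult[OF P] by (simp add: simps)
  qed
  ultimately show ?thesis
    using U unfolding clifford_hier_2_iff by blast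
qed

lemma controlled_in_clifford_hier_3:
  assumes U: "U \<in> clifford_hier n 2" and UU: "U * U \<in> pauli_group n"
  shows "controlled n U \<in> clifford_hier (Suc n) 3"
proof -
  have Uc: "U \<in> carrier_mat (2 ^ n) (2 ^ n)" and UUa: "U * mat_adjoint U = 1\<^sub>m (2 ^ n)"
    and UaU: "mat_adjoint U * U = 1\<^sub>m (2 ^ n)"
    using U unfolding clifford_hier_2_iff by (auto simp: unitary_n_def intro: unitary_n_adjoint_mult)
  note simps = Uc block_mat_simps[where N="2 ^ n"] pauli_group_carrier
  have UaU': "mat_adjoint U * (U * X) = X" if "X \<in> carrier_mat (2 ^ n) (2 ^ n)" for X
  proof -
    have "mat_adjoint U * (U * X) = (mat_adjoint U * U) * X"
      using that by (simp add: simps)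
    with that UaU show ?thesis
      by (simp add: simps)
  qed
  have conj_pauli: "U * (R * mat_adjoint U) \<in> pauli_group n" if "R \<in> pauli_group n" for R
    using U that Uc unfolding clifford_hier_2_iff by (simp add: simps)
  have "unitary_n (Suc n) (block_diag (1\<^sub>m (2 ^ n)) U)"
    unfolding unitary_n_Suc using UUa by (simp add: simps block_diag_one)
  moreover have "block_diag (1\<^sub>m (2 ^ n)) U * Q * mat_adjoint (block_diag (1\<^sub>m (2 ^ n)) U)
      \<in> clifford_hier (Suc n) 2" if "Q \<in> pauli_group (Suc n)" for Q
    using that
  proof (cases rule: pauli_group_SucE)
    case (diag a b R)
    have "a \<cdot>\<^sub>m R \<in> clifford_hier n 2"
      using diag by (simp add: pauli_in_clifford pauli_group_smult_sign)
    moreover have "mat_adjoint (a \<cdot>\<^sub>m R) * (b \<cdot>\<^sub>m (U * (R * mat_adjoint U))) \<in> pauli_group n"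
      using diag conj_pauli
      by (simp add: simps pauli_group_smult_sign pauli_group_mult pauli_group_adjoint)
    ultimately have "block_diag (a \<cdot>\<^sub>m R) (b \<cdot>\<^sub>m (U * (R * mat_adjoint U))) \<in> clifford_hier (Suc n) 2"
      using diag by (intro block_diag_in_clifford) (simp_all add: simps)
    with diag show ?thesis
      by (simp add: simps)
  next
    case (antidiag a b R)
    have "(a \<cdot>\<^sub>m R) * mat_adjoint U \<in> clifford_hier n 2"
      using antidiag clifford_adjoint_if_square_pauli[OF U UU]
      by (simp add: clifford_mult pauli_in_clifford pauli_group_smult_sign)
    then have V: "a \<cdot>\<^sub>m (R * mat_adjoint U) \<in> clifford_hier n 2"
      using antidiag by (simp add: simps)
    have "U * (mat_adjoint R * (U * R)) = (U * (mat_adjoint R * mat_adjoint U)) * ((U * U) * R)"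
      using antidiag by (simp add: simps UaU')
    also have "\<dots> \<in> pauli_group n"
      using antidiag conj_pauli UU
      by (simp add: pauli_group_mult pauli_group_adjoint)
    finally have "mat_adjoint (a \<cdot>\<^sub>m (R * mat_adjoint U)) * (b \<cdot>\<^sub>m (U * R)) \<in> pauli_group n"
      using antidiag by (simp add: simps pauli_group_smult_sign)
    with V have "block_antidiag (a \<cdot>\<^sub>m (R * mat_adjoint U)) (b \<cdot>\<^sub>m (U * R)) \<in> clifford_hier (Suc n) 2"
      using antidiag by (intro block_antidiag_in_clifford) (simp_all add: simps)
    with antidiag show ?thesis
      by (simp add: simps)
  qed
  ultimately show ?thesis
    unfolding clifford_hier_3_iff controlled_eq_block_diag[OF Uc] by blast
qed

lemma controlled_in_clifford_hier_3_iff: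
  assumes "unitary_n n U"
  shows "controlled n U \<in> clifford_hier (Suc n) 3 \<longleftrightarrow>
    U \<in> clifford_hier n 2 \<and> U * U \<in> pauli_group n"
  using controlled_in_clifford_hier_3D[OF assms] controlled_in_clifford_hier_3 by blast

theorem lemma1:
  fixes n :: nat and U :: "complex mat"
  assumes "unitary_n n U"
  shows "PSC n U \<longleftrightarrow>
           controlled n U \<in> clifford_hier (Suc n) 3 - clifford_hier (Suc n) 2"
proof -
  have "U \<in> carrier_mat (2 ^ n) (2 ^ n)"
    using assms unfolding unitary_n_def by simp
  then have "controlled n U \<in> clifford_hier (Suc n) 2 \<longleftrightarrow> U \<in> pauli_group n"
    by (rule controlled_in_clifford_iff)
  with controlled_in_clifford_hier_3_iff[OF assms] show ?thesis
    unfolding PSC_def by blast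
qed

end
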